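(* Let $Q$ be a countable dense subset of $2^\omega$. Let $T$ be a $G_\delta$ subset of $2^\omega\times2^\omega$ with $Q^2\subseteq T$, and let $g:T\to T$ be a homeomorphism such that $\pi_0\restriction g[Q^2]$ is injective. Let $h:2^\omega\to2^\omega$ be a homeomorphism and $i\in\{0,1\}$. Then the set $$C=\{(x,y)\in T: h(\pi_i(x,y))=\pi_0(g(x,y))\}$$ is closed and nowhere dense in $T$.
   Context: $\pi_0,\pi_1:2^\omega\times2^\omega\to2^\omega$ are the projections onto the first and second coordinate, respectively. $2^\omega$ is the Cantor set. *)

theory Defs
  imports "HOL-Analysis.Analysis"
begin

text \<open>The Cantor space 2^omega is modelled as the type nat \<Rightarrow> bool with the product
topology (bool carries the discrete topology). Products carry the product topology.\<close>

type_synonym cantor = "nat \<Rightarrow> bool"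

definition nowhere_dense_in :: "'a topology \<Rightarrow> 'a set \<Rightarrow> bool" where
  "nowhere_dense_in X S \<longleftrightarrow> X interior_of (X closure_of S) = {}"

definition proj :: "nat \<Rightarrow> 'a \<times> 'a \<Rightarrow> 'a" where
  "proj i p = (if i = 0 then fst p else snd p)"

end

theory Submission
  imports Defs
begin

text \<open>The set is the equalizer of two continuous maps into the Hausdorff space \<open>2\<^sup>\<omega>\<close>, hence
  closed. If it contained a nonempty relatively open set, it would contain \<open>(A \<times> B) \<inter> T\<close> for
  nonempty open \<open>A\<close>, \<open>B\<close>. Say \<open>i = 0\<close>. By density and since \<open>2\<^sup>\<omega>\<close> has no isolated points,
  there are \<open>x \<in> Q \<inter> A\<close> and distinct \<open>y\<^sub>1, y\<^sub>2 \<in> Q \<inter> B\<close>; then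
  \<open>\<pi>\<^sub>0 (g (x, y\<^sub>1)) = h x = \<pi>\<^sub>0 (g (x, y\<^sub>2))\<close>, contradicting the injectivity of \<open>\<pi>\<^sub>0 \<circ> g\<close> on
  \<open>Q\<^sup>2\<close>.\<close>

lemma Hausdorff_space_euclidean_t2: "Hausdorff_space (euclidean :: 'a::t2_space topology)"
  unfolding Hausdorff_space_def disjnt_def by simp (meson hausdorff)

lemma Hausdorff_space_cantor: "Hausdorff_space (euclidean :: cantor topology)"
  using Hausdorff_space_product_topology[of "\<lambda>_. euclidean :: bool topology" UNIV]
  by (simp add: euclidean_product_topology Hausdorff_space_euclidean_t2)

lemma closed_cantor_singleton: "closed {x :: cantor}"
  using Hausdorff_space_cantor Hausdorff_imp_t1_space closedin_t1_singleton by fastforce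

text \<open>A basic open box restricts only finitely many coordinates, so flipping a free
  coordinate of \<open>x\<close> stays inside it.\<close>
lemma not_open_cantor_singleton: "\<not> open {x :: cantor}"
proof
  assume "open {x}"
  then have "openin (product_topology (\<lambda>_. euclidean) UNIV) {x}"
    by (simp add: open_fun_def)
  from product_topology_open_contains_basis[OF this singletonI]
  obtain X where X: "x \<in> (\<Pi>\<^sub>E i\<in>UNIV. X i)" "finite {i. X i \<noteq> topspace euclidean}"
      "(\<Pi>\<^sub>E i\<in>UNIV. X i) \<subseteq> {x}"
    by blast
  obtain n where "X n = UNIV"
    using ex_new_if_finite[OF infinite_UNIV_nat X(2)] by auto
  then have "x(n := \<not> x n) \<in> (\<Pi>\<^sub>E i\<in>UNIV. X i)"
    using X(1) by (auto simp: PiE_iff)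
  with X(3) have "x(n := \<not> x n) = x"
    by blast
  then show False
    by (metis fun_upd_same)
qed

lemma continuous_on_proj: "continuous_on S (proj i)"
  unfolding proj_def by (cases "i = 0") (auto intro: continuous_on_fst continuous_on_snd continuous_on_id)

lemma dense_meets_open:
  assumes "closure Q = UNIV" "open S" "S \<noteq> {}"
  obtains q where "q \<in> Q" "q \<in> S"
  using open_Int_closure_eq_empty[OF assms(2), of Q] assms by auto

lemma dense_two_points_in_open:
  fixes Q :: "'a::topological_space set"
  assumes "closure Q = UNIV" and "\<And>x::'a. closed {x}" and "\<And>x::'a. \<not> open {x}"
    and "open B" and "B \<noteq> {}"
  obtains q1 q2 :: 'a where "q1 \<in> Q \<inter> B" "q2 \<in> Q \<inter> B" "q1 \<noteq> q2"
proof -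
  obtain q1 where q1: "q1 \<in> Q" "q1 \<in> B"
    using dense_meets_open[OF assms(1,4,5)] .
  have "B - {q1} \<noteq> {}"
    using assms(3)[of q1] assms(4) q1(2) by (metis Diff_eq_empty_iff subset_singleton_iff empty_iff)
  then obtain q2 where "q2 \<in> Q" "q2 \<in> B - {q1}"
    using dense_meets_open[OF assms(1) open_Diff[OF assms(4,2)]] by blast
  then show thesis
    using q1 that by blast
qed

text \<open>\<open>f (x, \<cdot>)\<close> takes two different values on \<open>Q \<inter> B\<close>, so it cannot be constantly \<open>\<phi> x\<close>.\<close>
lemma dense_box_not_in_graph:
  fixes f :: "'a::topological_space \<times> 'a \<Rightarrow> 'b"
  assumes "closure Q = UNIV" and "\<And>x::'a. closed {x}" and "\<And>x::'a. \<not> open {x}"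
    and "inj_on f (Q \<times> Q)"
    and "open A" "A \<noteq> {}" "open B" "B \<noteq> {}"
  obtains x y where "x \<in> Q \<inter> A" "y \<in> Q \<inter> B" "\<phi> x \<noteq> f (x, y)"
proof -
  obtain x where x: "x \<in> Q" "x \<in> A"
    using dense_meets_open[OF assms(1,5,6)] .
  obtain q1 q2 where q: "q1 \<in> Q \<inter> B" "q2 \<in> Q \<inter> B" "q1 \<noteq> q2"
    using dense_two_points_in_open[OF assms(1-3,7,8)] .
  have "f (x, q1) \<noteq> f (x, q2)"
    using inj_onD[OF assms(4)] x(1) q by blast
  then consider "\<phi> x \<noteq> f (x, q1)" | "\<phi> x \<noteq> f (x, q2)"
    by metis
  then show thesis
    using that x q(1,2) by cases blast+
qed

lemma dense_box_not_in_proj_graph: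
  fixes f :: "'a::topological_space \<times> 'a \<Rightarrow> 'b"
  assumes "closure Q = UNIV" and "\<And>x::'a. closed {x}" and "\<And>x::'a. \<not> open {x}"
    and "inj_on f (Q \<times> Q)" and "i \<in> {0, 1}"
    and "open A" "A \<noteq> {}" "open B" "B \<noteq> {}"
  obtains p where "p \<in> Q \<times> Q" "p \<in> A \<times> B" "\<phi> (proj i p) \<noteq> f p"
proof (cases "i = 0")
  case True
  obtain x y where "x \<in> Q \<inter> A" "y \<in> Q \<inter> B" "\<phi> x \<noteq> f (x, y)"
    using dense_box_not_in_graph[OF assms(1-4,6-9)] .
  with True show thesis
    using that[of "(x, y)"] by (simp add: proj_def)
next
  case False
  have "inj_on (f \<circ> prod.swap) (Q \<times> Q)"
    using assms(4) by (auto simp: inj_on_def)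
  then obtain y x where "y \<in> Q \<inter> B" "x \<in> Q \<inter> A" "\<phi> y \<noteq> (f \<circ> prod.swap) (y, x)"
    using dense_box_not_in_graph[OF assms(1-3) _ assms(8,9,6,7)] by blast
  with False show thesis
    using that[of "(x, y)"] by (simp add: proj_def)
qed

lemma interior_of_subtopology_prod_eq_empty:
  fixes T C :: "('a::topological_space \<times> 'b::topological_space) set"
  assumes "\<And>A B. open A \<Longrightarrow> open B \<Longrightarrow> A \<noteq> {} \<Longrightarrow> B \<noteq> {} \<Longrightarrow> \<exists>p \<in> (A \<times> B) \<inter> T. p \<notin> C"
  shows "top_of_set T interior_of C = {}"
unfolding interior_of_eq_empty
proof (intro allI impI, elim conjE)
  fix U
  assume U: "openin (top_of_set T) U" "U \<subseteq> C"
  show "U = {}"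
  proof (rule ccontr)
    assume "U \<noteq> {}"
    then obtain p where "p \<in> U"
      by blast
    obtain V where V: "open V" "U = T \<inter> V"
      using U(1) openin_open by blast
    obtain A B where AB: "open A" "open B" "p \<in> A \<times> B" "A \<times> B \<subseteq> V"
      using open_prod_elim[OF V(1)] \<open>p \<in> U\<close> V(2) by blast
    obtain q where q: "q \<in> A \<times> B" "q \<in> T" "q \<notin> C"
      using assms[OF AB(1,2)] AB(3) by blast
    have "q \<in> U"
      using q(1,2) AB(4) V(2) by blast
    with U(2) q(3) show False
      by blast
  qed
qed

lemma closedin_proj_equalizer:
  fixes T :: "('a::topological_space \<times> 'a) set" and g :: "'a \<times> 'a \<Rightarrow> 'a \<times> 'a" and h :: "'a \<Rightarrow> 'a"
  assumes "Hausdorff_space (euclidean :: 'a topology)"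
    and "continuous_on UNIV h" and "continuous_on T g"
  shows "closedin (top_of_set T) {p \<in> T. h (proj i p) = proj 0 (g p)}"
proof -
  have "continuous_on T (h \<circ> proj i)"
    using assms(2) by (intro continuous_on_compose continuous_on_proj) (auto intro: continuous_on_subset)
  moreover have "continuous_on T (proj 0 \<circ> g)"
    using assms(3) by (intro continuous_on_compose continuous_on_proj)
  ultimately have "closedin (top_of_set T) {p \<in> topspace (top_of_set T). (h \<circ> proj i) p = (proj 0 \<circ> g) p}"
    by (intro closedin_continuous_maps_eq[OF assms(1)])
      (simp_all only: continuous_map_iff_continuous)
  then show ?thesis
    by simp
qed

lemma interior_of_proj_equalizer_eq_empty:
  fixes T :: "('a::topological_space \<times> 'a) set"
  assumes "closure Q = UNIV" and "\<And>x::'a. closed {x}" and "\<And>x::'a. \<not> open {x}"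
    and "Q \<times> Q \<subseteq> T" and "inj_on (fst \<circ> g) (Q \<times> Q)" and "i \<in> {0, 1}"
  shows "top_of_set T interior_of {p \<in> T. h (proj i p) = proj 0 (g p)} = {}"
proof (rule interior_of_subtopology_prod_eq_empty)
  fix A B :: "'a set"
  assume "open A" "open B" "A \<noteq> {}" "B \<noteq> {}"
  then obtain p where p: "p \<in> Q \<times> Q" "p \<in> A \<times> B" "h (proj i p) \<noteq> (fst \<circ> g) p"
    using dense_box_not_in_proj_graph[OF assms(1-3,5,6), where \<phi> = h] by metis
  show "\<exists>p \<in> (A \<times> B) \<inter> T. p \<notin> {p \<in> T. h (proj i p) = proj 0 (g p)}"
  proof
    show "p \<in> (A \<times> B) \<inter> T"
      using p(1,2) assms(4) by blast
    show "p \<notin> {p \<in> T. h (proj i p) = proj 0 (g p)}"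
      using p(3) by (simp add: proj_def)
  qed
qed

theorem mainTheorem6:
  fixes Q :: "cantor set" and T :: "(cantor \<times> cantor) set"
    and g :: "cantor \<times> cantor \<Rightarrow> cantor \<times> cantor" and h :: "cantor \<Rightarrow> cantor" and i :: nat
  assumes "countable Q" and "closure Q = UNIV"
    and "gdelta_in euclidean T" and "Q \<times> Q \<subseteq> T"
    and "\<exists>g'. homeomorphism T T g g'"
    and "inj_on fst (g ` (Q \<times> Q))"
    and "\<exists>h'. homeomorphism UNIV UNIV h h'"
    and "i \<in> {0, 1}"
  shows "closedin (top_of_set T) {p \<in> T. h (proj i p) = proj 0 (g p)}
       \<and> nowhere_dense_in (top_of_set T) {p \<in> T. h (proj i p) = proj 0 (g p)}"
proof -
  obtain g' where g: "homeomorphism T T g g'" using assms(5) by blast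
  obtain h' where h: "homeomorphism UNIV UNIV h h'" using assms(7) by blast
  have closed: "closedin (top_of_set T) {p \<in> T. h (proj i p) = proj 0 (g p)}"
    using g h by (intro closedin_proj_equalizer Hausdorff_space_cantor) (simp_all add: homeomorphism_def)
  have "inj_on g T"
    by (rule inj_on_inverseI[where g = g']) (rule homeomorphism_apply1[OF g])
  then have "inj_on (fst \<circ> g) (Q \<times> Q)"
    by (rule comp_inj_on[OF inj_on_subset assms(6)]) (rule assms(4))
  then have "top_of_set T interior_of {p \<in> T. h (proj i p) = proj 0 (g p)} = {}"
    by (intro interior_of_proj_equalizer_eq_empty[OF assms(2) closed_cantor_singleton
          not_open_cantor_singleton assms(4) _ assms(8)])
  with closed show ?thesis
    by (simp add: nowhere_dense_in_def closure_of_closedin)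
qed

end
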